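(* Let $h\ge 2$ be an integer and let $O$ be a finite set of next hops with $\delta=|O|$ and probability distribution $(p_o)_{o\in O}$, with entropy $H_O=\sum_{o\in O} p_o\log_2\frac{1}{p_o}$. Let $T$ be the complete binary trie of height $h$ whose $2^h$ leaves are labeled independently with next hop $o$ with probability $p_o$, let $D$ be the DAG obtained from $T$ by trie-folding, and let $V^j_D$ be the set of nodes of $D$ at level $j$. For $1\le j\le h$ put $\beta_j=\min\{\frac{H_O}{h-j}2^h+3,\,2^{h-j},\,\delta^{2^j}\}$ (with the first term $+\infty$ for $j=h$), let $k^*\in\{1,\dots,h\}$ be a level at which $\beta_j$ attains its maximum, and suppose each node of $D$ is stored using $2(h-k^* )$ bits. Then for every level $j=1,\dots,h$ the expected number of bits needed to store the nodes of $D$ at level $j$, namely $2(h-k^* )\,E(|V^j_D|)$, is at most \[\mathcal{M}=2 H_O 2^{h} + 6h.\]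
   Context: Levels: the level of a node of $T$ is $h$ minus its distance from the root; the root has level $h$, leaves level $0$, and level $j$ has $2^{h-j}$ nodes, each the root of a subtrie of height $j$ with $2^j$ labeled leaves. Trie-folding merges nodes whose rooted subtries are identical (same structure and same leaf next-hop labels), producing a DAG $D$; the nodes of $D$ at level $j$ correspond to the distinct leaf-label strings of length $2^j$ among the $2^{h-j}$ level-$j$ subtries. Each node of $D$ stores two child pointers of $h-k^*$ bits each. *)

theory Defs
  imports Complex_Main "HOL-Library.FuncSet"
begin

text \<open>Leaves of the complete binary trie of height h are indexed 0..<2^h (left to right).
A leaf labelling is an (extensional) function from leaf indices to next hops in Hops.\<close>

definition labelings :: "nat \<Rightarrow> 'a set \<Rightarrow> (nat \<Rightarrow> 'a) set" where
  "labelings h Hops = PiE {..<2^h} (\<lambda>_. Hops)"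

definition labeling_prob :: "nat \<Rightarrow> ('a \<Rightarrow> real) \<Rightarrow> (nat \<Rightarrow> 'a) \<Rightarrow> real" where
  "labeling_prob h p f = (\<Prod>i<2^h. p (f i))"

text \<open>Leaf-label string of the i-th subtrie at level j (leaves i*2^j ..< (i+1)*2^j).\<close>

definition subtrie_string :: "nat \<Rightarrow> (nat \<Rightarrow> 'a) \<Rightarrow> nat \<Rightarrow> 'a list" where
  "subtrie_string j f i = map f [i * 2^j ..< (i + 1) * 2^j]"

text \<open>Nodes of the folded DAG D at level j: distinct leaf-label strings of the 2^(h-j)
level-j subtries.\<close>

definition dag_level_nodes :: "nat \<Rightarrow> nat \<Rightarrow> (nat \<Rightarrow> 'a) \<Rightarrow> 'a list set" where
  "dag_level_nodes h j f = subtrie_string j f ` {..<2^(h-j)}"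

definition expected_level_size :: "nat \<Rightarrow> 'a set \<Rightarrow> ('a \<Rightarrow> real) \<Rightarrow> nat \<Rightarrow> real" where
  "expected_level_size h Hops p j =
     (\<Sum>f\<in>labelings h Hops. labeling_prob h p f * real (card (dag_level_nodes h j f)))"

definition entropy :: "'a set \<Rightarrow> ('a \<Rightarrow> real) \<Rightarrow> real" where
  "entropy Hops p = (\<Sum>x\<in>Hops. p x * log 2 (1 / p x))"

text \<open>beta_j; for j = h the first term is +infinity, so it is omitted from the min.\<close>

definition beta :: "nat \<Rightarrow> 'a set \<Rightarrow> ('a \<Rightarrow> real) \<Rightarrow> nat \<Rightarrow> real" where
  "beta h Hops p j =
     (if j = h then min (2 ^ (h - j)) (real (card Hops) ^ (2 ^ j))
      else min (entropy Hops p / real (h - j) * 2 ^ h + 3)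
               (min (2 ^ (h - j)) (real (card Hops) ^ (2 ^ j))))"

end

theory Submission imports Defs begin

text \<open>
A level-\<open>j\<close> node of \<open>D\<close> is a label string \<open>s\<close> of length \<open>2^j\<close> that occurs among the
\<open>m = 2^(h-j)\<close> level-\<open>j\<close> subtries. A fixed subtrie carries \<open>s\<close> with probability \<open>P(s)\<close>, so
by the union bound \<open>s\<close> occurs with probability at most \<open>min 1 (m P(s))\<close>. Writing
\<open>min 1 (m P(s)) = P(s) min (1/P(s)) m\<close> and using \<open>min x m \<le> m log x / log m + 3\<close>, the sum
over all strings is at most \<open>m/log m\<close> times the entropy \<open>2^j H\<close> of the string distribution,
plus 3; that is \<open>E|V^j| \<le> H 2^h/(h-j) + 3\<close>. Together with the trivial bounds \<open>2^(h-j)\<close> and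
\<open>\<delta>^(2^j)\<close> this gives \<open>E|V^j| \<le> \<beta>_j \<le> \<beta>_k*\<close>, and multiplying by \<open>2(h-k*)\<close> yields the claim.
\<close>

lemma min_le_log_ratio:
  fixes x m :: real
  assumes "x \<ge> 1" "m \<ge> 2"
  shows "min x m \<le> m * log 2 x / log 2 m + 3"
proof -
  have ratio_nonneg: "m * log 2 x / log 2 m \<ge> 0"
    using assms by simp
  consider "m \<le> x" | "x \<le> 3" | "3 < x" "x < m"
    by linarith
  then show ?thesis
  proof cases
    case 1
    then have "m \<le> m * log 2 x / log 2 m"
      using assms by (simp add: field_simps)
    then show ?thesis
      by linarith
  next
    case 2
    then show ?thesis
      using ratio_nonneg by linarith
  next
    case 3
    \<comment> \<open>\<open>ln t / t\<close> decreases on \<open>[e, \<infinity>)\<close> and \<open>e < 3 < x < m\<close>\<close>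
    have "ln m / m \<le> ln x / x"
      using ln_x_over_x_mono[of x m] 3 exp_le by linarith
    then have "x \<le> m * ln x / ln m"
      using 3 assms by (simp add: field_simps)
    then show ?thesis
      by (simp add: log_def)
  qed
qed

definition strings :: "'a set \<Rightarrow> nat \<Rightarrow> 'a list set" where
  "strings A n = {xs. set xs \<subseteq> A \<and> length xs = n}"

lemma strings_0 [simp]: "strings A 0 = {[]}"
  by (auto simp: strings_def)

lemma finite_strings: "finite A \<Longrightarrow> finite (strings A n)"
  unfolding strings_def by (rule finite_lists_length_eq)

lemma card_strings: "finite A \<Longrightarrow> card (strings A n) = card A ^ n"
  unfolding strings_def by (rule card_lists_length_eq)

lemma sum_strings_Suc:
  assumes "finite A"
  shows "(\<Sum>s\<in>strings A (Suc n). g s) = (\<Sum>xs\<in>strings A n. \<Sum>x\<in>A. g (x # xs))"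
proof -
  have "strings A (Suc n) = (\<lambda>(xs, x). x # xs) ` (strings A n \<times> A)"
    unfolding strings_def by (rule lists_length_Suc_eq)
  moreover have "inj_on (\<lambda>(xs, x). x # xs) (strings A n \<times> A)"
    by (auto simp: inj_on_def)
  ultimately show ?thesis
    by (simp add: sum.reindex sum.cartesian_product split_def)
qed

lemma subtrie_end_le:
  assumes "i < 2 ^ (h - j)" "j \<le> h"
  shows "(i + 1) * 2 ^ j \<le> (2::nat) ^ h"
proof -
  have "(i + 1) * 2 ^ j \<le> 2 ^ (h - j) * (2::nat) ^ j"
    using assms(1) by (intro mult_right_mono) auto
  also have "\<dots> = 2 ^ h"
    using assms(2) by (simp add: power_add[symmetric])
  finally show ?thesis .
qed

lemma subtrie_string_eq_iff:
  "length s = 2 ^ j \<Longrightarrow> subtrie_string j f i = s \<longleftrightarrow> (\<forall>k<2 ^ j. f (i * 2 ^ j + k) = s ! k)"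
  unfolding subtrie_string_def by (auto simp: list_eq_iff_nth_eq nth_upt)

lemma dag_level_nodes_subset_strings:
  assumes "f \<in> labelings h A" "j \<le> h"
  shows "dag_level_nodes h j f \<subseteq> strings A (2 ^ j)"
proof
  fix s assume "s \<in> dag_level_nodes h j f"
  then obtain i where i: "i < 2 ^ (h - j)" and s: "s = subtrie_string j f i"
    unfolding dag_level_nodes_def by auto
  have "f x \<in> A" if "x < (i + 1) * 2 ^ j" for x
  proof -
    have "x < 2 ^ h"
      using that subtrie_end_le[OF i assms(2)] by linarith
    then show ?thesis
      using assms(1) by (simp add: labelings_def PiE_iff)
  qed
  then show "s \<in> strings A (2 ^ j)"
    by (auto simp: strings_def s subtrie_string_def)
qed

lemma card_dag_level_nodes_le:
  assumes "finite A" "f \<in> labelings h A" "j \<le> h"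
  shows "card (dag_level_nodes h j f) \<le>
    (\<Sum>s\<in>strings A (2 ^ j). min 1 (\<Sum>i<2 ^ (h - j). if subtrie_string j f i = s then 1 else 0 :: real))"
proof -
  let ?V = "dag_level_nodes h j f"
  have "card ?V = (\<Sum>s\<in>strings A (2 ^ j). if s \<in> ?V then 1 else 0 :: real)"
    using dag_level_nodes_subset_strings[OF assms(2,3)] finite_strings[OF assms(1)]
    by (simp add: sum.inter_restrict[symmetric] Int_absorb1)
  also have "\<dots> \<le> (\<Sum>s\<in>strings A (2 ^ j).
      min 1 (\<Sum>i<2 ^ (h - j). if subtrie_string j f i = s then 1 else 0 :: real))"
  proof (intro sum_mono)
    fix s
    have "1 \<le> (\<Sum>i<2 ^ (h - j). if subtrie_string j f i = s then 1 else 0 :: real)" if s: "s \<in> ?V"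
    proof -
      obtain i where "i < 2 ^ (h - j)" "subtrie_string j f i = s"
        using s unfolding dag_level_nodes_def by blast
      then show ?thesis
        using member_le_sum[of i "{..<2 ^ (h - j)}" "\<lambda>i. if subtrie_string j f i = s then 1 else 0 :: real"]
        by simp
    qed
    moreover have "0 \<le> (\<Sum>i<2 ^ (h - j). if subtrie_string j f i = s then 1 else 0 :: real)"
      by (intro sum_nonneg) simp
    ultimately show "(if s \<in> ?V then 1 else 0)
        \<le> min 1 (\<Sum>i<2 ^ (h - j). if subtrie_string j f i = s then 1 else 0 :: real)"
      by simp
  qed
  finally show ?thesis .
qed

locale finite_distribution =
  fixes A :: "'a set" and p :: "'a \<Rightarrow> real"
  assumes finite: "finite A"
    and pos: "\<And>x. x \<in> A \<Longrightarrow> p x > 0"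
    and sum_eq_1: "(\<Sum>x\<in>A. p x) = 1"
begin

lemma sum_string_prob: "(\<Sum>s\<in>strings A n. prod_list (map p s)) = 1"
proof (induction n)
  case (Suc n)
  then show ?case
    by (simp add: sum_strings_Suc[OF finite] sum_distrib_right[symmetric] sum_eq_1)
qed simp

lemma string_prob_pos: "s \<in> strings A n \<Longrightarrow> prod_list (map p s) > 0"
  unfolding strings_def by (induction s arbitrary: n) (auto simp: pos)

lemma string_prob_le_1:
  assumes "s \<in> strings A n"
  shows "prod_list (map p s) \<le> 1"
proof -
  have "prod_list (map p s) \<le> (\<Sum>t\<in>strings A n. prod_list (map p t))"
    using assms finite_strings[OF finite] string_prob_pos
    by (intro member_le_sum) (auto intro: less_imp_le)
  then show ?thesis
    by (simp add: sum_string_prob)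
qed

lemma entropy_nonneg: "entropy A p \<ge> 0"
  unfolding entropy_def
proof (intro sum_nonneg)
  fix x assume x: "x \<in> A"
  have "p x \<le> 1"
    using string_prob_le_1[of "[x]" 1] x by (simp add: strings_def)
  then show "0 \<le> p x * log 2 (1 / p x)"
    using pos[OF x] by simp
qed

lemma entropy_strings:
  "(\<Sum>s\<in>strings A n. prod_list (map p s) * log 2 (1 / prod_list (map p s))) = n * entropy A p"
proof (induction n)
  case (Suc n)
  let ?P = "\<lambda>s. prod_list (map p s)"
  have split_log: "p x * ?P xs * log 2 (1 / (p x * ?P xs))
      = ?P xs * (p x * log 2 (1 / p x)) + p x * (?P xs * log 2 (1 / ?P xs))"
    if "xs \<in> strings A n" "x \<in> A" for xs x
    using pos[OF that(2)] string_prob_pos[OF that(1)]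
    by (simp add: log_divide log_mult algebra_simps)
  have "(\<Sum>s\<in>strings A (Suc n). ?P s * log 2 (1 / ?P s))
      = (\<Sum>xs\<in>strings A n. \<Sum>x\<in>A. ?P xs * (p x * log 2 (1 / p x)) + p x * (?P xs * log 2 (1 / ?P xs)))"
    by (simp add: sum_strings_Suc[OF finite] split_log cong: sum.cong)
  also have "\<dots> = (\<Sum>xs\<in>strings A n. ?P xs * entropy A p + ?P xs * log 2 (1 / ?P xs))"
    by (simp add: sum.distrib sum_distrib_left[symmetric] sum_distrib_right[symmetric]
        sum_eq_1 entropy_def)
  also have "\<dots> = entropy A p + n * entropy A p"
    by (simp add: sum.distrib sum_distrib_right[symmetric] sum_string_prob Suc)
  finally show ?case
    by (simp add: algebra_simps)
qed simp

lemma sum_min_string_prob_le: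
  assumes "m \<ge> 2"
  shows "(\<Sum>s\<in>strings A n. min 1 (m * prod_list (map p s))) \<le> m * (n * entropy A p) / log 2 m + 3"
proof -
  let ?P = "\<lambda>s. prod_list (map p s)"
  have "min 1 (m * ?P s) \<le> m / log 2 m * (?P s * log 2 (1 / ?P s)) + 3 * ?P s"
    if s: "s \<in> strings A n" for s
  proof -
    have P: "0 < ?P s" "?P s \<le> 1"
      using string_prob_pos[OF s] string_prob_le_1[OF s] by auto
    have "min 1 (m * ?P s) = ?P s * min (1 / ?P s) m"
      using P by (simp add: min_def field_simps)
    also have "\<dots> \<le> ?P s * (m * log 2 (1 / ?P s) / log 2 m + 3)"
      using P assms by (intro mult_left_mono min_le_log_ratio) auto
    finally show ?thesis
      by (simp add: algebra_simps)
  qed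
  then have "(\<Sum>s\<in>strings A n. min 1 (m * ?P s))
      \<le> (\<Sum>s\<in>strings A n. m / log 2 m * (?P s * log 2 (1 / ?P s)) + 3 * ?P s)"
    by (rule sum_mono)
  also have "\<dots> = m / log 2 m * (\<Sum>s\<in>strings A n. ?P s * log 2 (1 / ?P s))
      + 3 * (\<Sum>s\<in>strings A n. ?P s)"
    by (simp add: sum.distrib sum_distrib_left)
  finally show ?thesis
    by (simp add: entropy_strings sum_string_prob)
qed

lemma labeling_prob_nonneg: "f \<in> labelings h A \<Longrightarrow> labeling_prob h p f \<ge> 0"
  unfolding labeling_prob_def labelings_def
  by (intro prod_nonneg) (auto intro: less_imp_le pos)

lemma sum_labeling_prob: "(\<Sum>f\<in>labelings h A. labeling_prob h p f) = 1"
  using prod_sum_PiE[of "{..<2 ^ h :: nat}" "\<lambda>_. A" "\<lambda>_. p"] finite sum_eq_1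
  by (simp add: labelings_def labeling_prob_def)

lemma expectation_le_const:
  assumes "\<And>f. f \<in> labelings h A \<Longrightarrow> X f \<le> b"
  shows "(\<Sum>f\<in>labelings h A. labeling_prob h p f * X f) \<le> b"
proof -
  have "(\<Sum>f\<in>labelings h A. labeling_prob h p f * X f) \<le> (\<Sum>f\<in>labelings h A. labeling_prob h p f * b)"
    by (intro sum_mono mult_left_mono assms labeling_prob_nonneg)
  also have "\<dots> = b"
    by (simp add: sum_distrib_right[symmetric] sum_labeling_prob)
  finally show ?thesis .
qed

lemma prob_agree_on:
  assumes "finite I" "B \<subseteq> I" "\<And>x. x \<in> B \<Longrightarrow> c x \<in> A"
  shows "(\<Sum>f\<in>PiE I (\<lambda>_. A). (\<Prod>x\<in>I. p (f x)) * (if \<forall>x\<in>B. f x = c x then 1 else 0))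
       = (\<Prod>x\<in>B. p (c x))"
proof -
  define q where "q x y = p y * (if x \<in> B \<and> y \<noteq> c x then 0 else 1)" for x y
  have "(if \<forall>x\<in>B. f x = c x then 1 else 0) = (\<Prod>x\<in>I. if x \<in> B \<and> f x \<noteq> c x then 0 else 1 :: real)"
    for f using assms(1,2) by (auto simp: prod_zero_iff intro!: prod.neutral)
  then have "(\<Prod>x\<in>I. p (f x)) * (if \<forall>x\<in>B. f x = c x then 1 else 0) = (\<Prod>x\<in>I. q x (f x))" for f
    by (simp add: q_def prod.distrib)
  then have "(\<Sum>f\<in>PiE I (\<lambda>_. A). (\<Prod>x\<in>I. p (f x)) * (if \<forall>x\<in>B. f x = c x then 1 else 0))
      = (\<Prod>x\<in>I. \<Sum>y\<in>A. q x y)"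
    using assms(1) finite by (simp add: prod_sum_PiE)
  also have "\<dots> = (\<Prod>x\<in>I. if x \<in> B then p (c x) else 1)"
  proof (intro prod.cong refl)
    fix x
    have "(\<Sum>y\<in>A. q x y) = (\<Sum>y\<in>A. if y = c x then p y else 0)" if "x \<in> B"
      using that by (intro sum.cong) (auto simp: q_def)
    then show "(\<Sum>y\<in>A. q x y) = (if x \<in> B then p (c x) else 1)"
      using assms(3) finite sum_eq_1 by (simp add: q_def)
  qed
  also have "\<dots> = (\<Prod>x\<in>B. p (c x))"
    using assms(1,2) by (simp add: prod.inter_restrict[symmetric] Int_absorb1)
  finally show ?thesis .
qed

lemma expected_level_size_le_const:
  assumes "\<And>f. f \<in> labelings h A \<Longrightarrow> real (card (dag_level_nodes h j f)) \<le> b"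
  shows "expected_level_size h A p j \<le> b"
  unfolding expected_level_size_def
  using assms by (intro expectation_le_const) auto

lemma prob_subtrie_string:
  assumes "j \<le> h" "i < 2 ^ (h - j)" "s \<in> strings A (2 ^ j)"
  shows "(\<Sum>f\<in>labelings h A. labeling_prob h p f * (if subtrie_string j f i = s then 1 else 0))
       = prod_list (map p s)"
proof -
  define g where "g k = i * 2 ^ j + k" for k
  define c where "c x = s ! (x - i * 2 ^ j)" for x
  have s: "length s = 2 ^ j" "set s \<subseteq> A"
    using assms(3) by (auto simp: strings_def)
  have B: "g ` {..<2 ^ j} \<subseteq> {..<2 ^ h}"
    using subtrie_end_le[OF assms(2,1)] by (auto simp: g_def algebra_simps)
  have c: "c x \<in> A" if "x \<in> g ` {..<2 ^ j}" for x
    using that s by (auto simp: c_def g_def)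
  have event: "subtrie_string j f i = s \<longleftrightarrow> (\<forall>x\<in>g ` {..<2 ^ j}. f x = c x)" for f
    using subtrie_string_eq_iff[OF s(1)] by (simp add: g_def c_def) (simp add: Ball_def)
  have "(\<Sum>f\<in>labelings h A. labeling_prob h p f * (if subtrie_string j f i = s then 1 else 0))
      = (\<Prod>x\<in>g ` {..<2 ^ j}. p (c x))"
    using prob_agree_on[OF finite_lessThan B c] by (simp add: labelings_def labeling_prob_def event)
  also have "\<dots> = (\<Prod>k<2 ^ j. p (s ! k))"
    by (simp add: prod.reindex inj_on_def g_def c_def)
  also have "\<dots> = prod_list (map p s)"
    using s(1) by (simp add: prod.list_conv_set_nth atLeast0LessThan)
  finally show ?thesis .
qed

lemma expected_level_size_le_union_bound:
  assumes "j \<le> h"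
  shows "expected_level_size h A p j \<le> (\<Sum>s\<in>strings A (2 ^ j). min 1 (2 ^ (h - j) * prod_list (map p s)))"
proof -
  let ?w = "labeling_prob h p"
  let ?N = "\<lambda>f s. \<Sum>i<2 ^ (h - j). if subtrie_string j f i = s then 1 else 0 :: real"
  have "expected_level_size h A p j \<le> (\<Sum>f\<in>labelings h A. ?w f * (\<Sum>s\<in>strings A (2 ^ j). min 1 (?N f s)))"
    unfolding expected_level_size_def
    by (intro sum_mono mult_left_mono card_dag_level_nodes_le finite assms labeling_prob_nonneg)
  also have "\<dots> = (\<Sum>s\<in>strings A (2 ^ j). \<Sum>f\<in>labelings h A. ?w f * min 1 (?N f s))"
    by (simp add: sum_distrib_left sum.swap[of _ "labelings h A"])
  also have "\<dots> \<le> (\<Sum>s\<in>strings A (2 ^ j). min 1 (2 ^ (h - j) * prod_list (map p s)))"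
  proof (intro sum_mono)
    fix s assume s: "s \<in> strings A (2 ^ j)"
    have "(\<Sum>f\<in>labelings h A. ?w f * min 1 (?N f s)) \<le> (\<Sum>f\<in>labelings h A. ?w f * ?N f s)"
      by (intro sum_mono mult_left_mono labeling_prob_nonneg) auto
    also have "\<dots> = (\<Sum>i<2 ^ (h - j). \<Sum>f\<in>labelings h A. ?w f * (if subtrie_string j f i = s then 1 else 0))"
      by (simp add: sum_distrib_left sum.swap[of _ "labelings h A"])
    also have "\<dots> = 2 ^ (h - j) * prod_list (map p s)"
      using prob_subtrie_string[OF assms _ s] by simp
    finally show "(\<Sum>f\<in>labelings h A. ?w f * min 1 (?N f s)) \<le> min 1 (2 ^ (h - j) * prod_list (map p s))"
      using expectation_le_const[of h "\<lambda>f. min 1 (?N f s)" 1] by simp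
  qed
  finally show ?thesis .
qed

lemma expected_level_size_le_beta:
  assumes "j \<le> h"
  shows "expected_level_size h A p j \<le> beta h A p j"
proof -
  have "expected_level_size h A p j \<le> 2 ^ (h - j)"
  proof (rule expected_level_size_le_const)
    fix f
    have "card (dag_level_nodes h j f) \<le> card {..<(2::nat) ^ (h - j)}"
      unfolding dag_level_nodes_def by (rule card_image_le) simp
    then show "real (card (dag_level_nodes h j f)) \<le> 2 ^ (h - j)"
      by simp
  qed
  moreover have "expected_level_size h A p j \<le> real (card A) ^ 2 ^ j"
  proof (rule expected_level_size_le_const)
    fix f assume "f \<in> labelings h A"
    then have "card (dag_level_nodes h j f) \<le> card (strings A (2 ^ j))"
      using assms finite_strings[OF finite] by (intro card_mono dag_level_nodes_subset_strings)
    then show "real (card (dag_level_nodes h j f)) \<le> real (card A) ^ 2 ^ j"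
      by (simp add: card_strings[OF finite] flip: of_nat_power)
  qed
  moreover have "expected_level_size h A p j \<le> entropy A p / real (h - j) * 2 ^ h + 3" if "j < h"
  proof -
    have "(2::real) \<le> 2 ^ (h - j)"
      using that power_increasing[of 1 "h - j" "2::real"] by simp
    then have "expected_level_size h A p j \<le> 2 ^ (h - j) * (2 ^ j * entropy A p) / log 2 (2 ^ (h - j)) + 3"
      using order_trans[OF expected_level_size_le_union_bound[OF assms] sum_min_string_prob_le]
      by simp
    also have "\<dots> = entropy A p / real (h - j) * 2 ^ h + 3"
      using assms that by (simp add: log_nat_power field_simps flip: power_add)
    finally show ?thesis .
  qed
  ultimately show ?thesis
    using assms unfolding beta_def by auto
qed

end

theorem corollary1:
  fixes h :: nat and Hops :: "'a set" and p :: "'a \<Rightarrow> real" and kstar :: nat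
  assumes "h \<ge> 2"
    and "finite Hops" and "Hops \<noteq> {}"
    and "\<forall>x\<in>Hops. p x > 0" and "(\<Sum>x\<in>Hops. p x) = 1"
    and "kstar \<in> {1..h}"
    and "\<forall>j\<in>{1..h}. beta h Hops p j \<le> beta h Hops p kstar"
  shows "\<forall>j\<in>{1..h}. 2 * real (h - kstar) * expected_level_size h Hops p j
           \<le> 2 * entropy Hops p * 2 ^ h + 6 * real h"
proof
  fix j assume j: "j \<in> {1..h}"
  interpret finite_distribution Hops p
    using assms(2,4,5) by unfold_locales auto
  have E: "expected_level_size h Hops p j \<le> beta h Hops p kstar"
    using expected_level_size_le_beta[of j h] j assms(7) by (meson atLeastAtMost_iff order_trans)
  show "2 * real (h - kstar) * expected_level_size h Hops p j \<le> 2 * entropy Hops p * 2 ^ h + 6 * real h"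
  proof (cases "kstar = h")
    case True
    then show ?thesis
      using entropy_nonneg by simp
  next
    case False
    then have hk: "real (h - kstar) > 0"
      using assms(6) by auto
    have "expected_level_size h Hops p j \<le> entropy Hops p / real (h - kstar) * 2 ^ h + 3"
      using E False unfolding beta_def by simp
    then have "real (h - kstar) * expected_level_size h Hops p j
        \<le> entropy Hops p * 2 ^ h + 3 * real (h - kstar)"
      using hk by (simp add: field_simps)
    then show ?thesis
      by (simp add: of_nat_diff)
  qed
qed

end
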